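(* Let $\varepsilon\in\{-1,1\}$, let $M(\phi,\xi,\eta,g_M)$ be a Lorentzian almost (para)contact manifold of dimension $2m+1$, let $(N,g_N)$ be a semi-Riemannian manifold of dimension $n$, and let $F:M\to N$ be an anti-invariant semi-Riemannian submersion. If $m=n$, then $\phi(\ker F_* )=(\ker F_* )^\perp$. Moreover, $N$ is a Riemannian manifold.
   Context: A Lorentzian almost contact ($\varepsilon=-1$), resp. almost paracontact ($\varepsilon=1$), manifold is a $(2m+1)$-dimensional manifold $M$ with Lorentzian metric $g_M$, $(1,1)$-tensor $\phi$, vector field $\xi$ and $1$-form $\eta$ with $\phi^2X=\varepsilon X+\eta(X)\xi$, $g_M(\phi X,\phi Y)=g_M(X,Y)+\eta(X)\eta(Y)$, $\eta(X)=\varepsilon g_M(X,\xi)$, $\eta(\xi)=-\varepsilon$. A semi-Riemannian submersion $F:M\to N$ is a submersion with nondegenerate fibres such that $F_*$ is an isometry from $(\ker F_* )^\perp$ onto $TN$; it is anti-invariant if $\phi(\ker F_* )\subseteq(\ker F_* )^\perp$. A Riemannian manifold has positive definite metric. *)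

theory Defs
  imports "HOL-Analysis.Analysis"
begin

text \<open>A tangent space of the (2m+1)-manifold M is modelled by a fixed euclidean_space type 'v,
  a tangent space of N by a type 'w; tensor fields are point-indexed families.\<close>

definition sym_bilinear_form :: "('v::real_vector \<Rightarrow> 'v \<Rightarrow> real) \<Rightarrow> bool" where
  "sym_bilinear_form g \<longleftrightarrow> bilinear g \<and> (\<forall>x y. g x y = g y x)"

definition nondegenerate_form :: "('v::real_vector \<Rightarrow> 'v \<Rightarrow> real) \<Rightarrow> bool" where
  "nondegenerate_form g \<longleftrightarrow> (\<forall>x. (\<forall>y. g x y = 0) \<longrightarrow> x = 0)"

definition semi_riemannian_form :: "('v::real_vector \<Rightarrow> 'v \<Rightarrow> real) \<Rightarrow> bool" where
  "semi_riemannian_form g \<longleftrightarrow> sym_bilinear_form g \<and> nondegenerate_form g"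

definition form_index :: "('v::euclidean_space \<Rightarrow> 'v \<Rightarrow> real) \<Rightarrow> nat" where
  "form_index g = Max {dim W | W. subspace W \<and> (\<forall>x\<in>W. x \<noteq> 0 \<longrightarrow> g x x < 0)}"

definition lorentzian_form :: "('v::euclidean_space \<Rightarrow> 'v \<Rightarrow> real) \<Rightarrow> bool" where
  "lorentzian_form g \<longleftrightarrow> semi_riemannian_form g \<and> form_index g = 1"

definition positive_definite_form :: "('v::real_vector \<Rightarrow> 'v \<Rightarrow> real) \<Rightarrow> bool" where
  "positive_definite_form g \<longleftrightarrow> sym_bilinear_form g \<and> (\<forall>x. x \<noteq> 0 \<longrightarrow> g x x > 0)"

definition orth_compl :: "('v \<Rightarrow> 'v \<Rightarrow> real) \<Rightarrow> 'v set \<Rightarrow> 'v set" where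
  "orth_compl g S = {x. \<forall>y\<in>S. g x y = 0}"

definition nondegenerate_on :: "('v::real_vector \<Rightarrow> 'v \<Rightarrow> real) \<Rightarrow> 'v set \<Rightarrow> bool" where
  "nondegenerate_on g S \<longleftrightarrow> (\<forall>x\<in>S. (\<forall>y\<in>S. g x y = 0) \<longrightarrow> x = 0)"

text \<open>Lorentzian almost contact (eps = -1) / almost paracontact (eps = 1) structure at every point.\<close>
definition lorentzian_almost_para_contact ::
  "real \<Rightarrow> ('p \<Rightarrow> 'v::euclidean_space \<Rightarrow> 'v \<Rightarrow> real) \<Rightarrow> ('p \<Rightarrow> 'v \<Rightarrow> 'v) \<Rightarrow> ('p \<Rightarrow> 'v)
     \<Rightarrow> ('p \<Rightarrow> 'v \<Rightarrow> real) \<Rightarrow> bool" where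
  "lorentzian_almost_para_contact eps g \<phi> \<xi> \<eta> \<longleftrightarrow>
     (\<forall>p. lorentzian_form (g p) \<and> linear (\<phi> p) \<and> linear (\<eta> p) \<and>
       (\<forall>X. \<phi> p (\<phi> p X) = eps *\<^sub>R X + \<eta> p X *\<^sub>R \<xi> p) \<and>
       (\<forall>X Y. g p (\<phi> p X) (\<phi> p Y) = g p X Y + \<eta> p X * \<eta> p Y) \<and>
       (\<forall>X. \<eta> p X = eps * g p X (\<xi> p)) \<and>
       \<eta> p (\<xi> p) = - eps)"

text \<open>Semi-Riemannian submersion F with differential dF (dF p : T_pM \<rightarrow> T_{F p}N).\<close>
definition semi_riemannian_submersion ::
  "('p \<Rightarrow> 'v::euclidean_space \<Rightarrow> 'v \<Rightarrow> real) \<Rightarrow> ('q \<Rightarrow> 'w::euclidean_space \<Rightarrow> 'w \<Rightarrow> real)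
     \<Rightarrow> ('p \<Rightarrow> 'q) \<Rightarrow> ('p \<Rightarrow> 'v \<Rightarrow> 'w) \<Rightarrow> bool" where
  "semi_riemannian_submersion gM gN F dF \<longleftrightarrow>
     surj F \<and>
     (\<forall>p. linear (dF p) \<and> surj (dF p) \<and>
       nondegenerate_on (gM p) {v. dF p v = 0} \<and>
       bij_betw (dF p) (orth_compl (gM p) {v. dF p v = 0}) UNIV \<and>
       (\<forall>X\<in>orth_compl (gM p) {v. dF p v = 0}. \<forall>Y\<in>orth_compl (gM p) {v. dF p v = 0}.
          gN (F p) (dF p X) (dF p Y) = gM p X Y))"

definition anti_invariant ::
  "('p \<Rightarrow> 'v::euclidean_space \<Rightarrow> 'v \<Rightarrow> real) \<Rightarrow> ('p \<Rightarrow> 'v \<Rightarrow> 'v) \<Rightarrow> ('p \<Rightarrow> 'v \<Rightarrow> 'w::real_vector) \<Rightarrow> bool" where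
  "anti_invariant gM \<phi> dF \<longleftrightarrow>
     (\<forall>p. \<phi> p ` {v. dF p v = 0} \<subseteq> orth_compl (gM p) {v. dF p v = 0})"

end

theory Submission imports Defs begin

text \<open>At each point p let K = ker dF_p be the vertical space and H its orthogonal complement.
  Since K is nondegenerate and dF_p maps H isomorphically onto the tangent space of N,
  dim H = n and dim K = (2m + 1) - n = n + 1. The structure equations give
  \<phi> \<circ> \<phi> = \<epsilon> + \<eta> \<otimes> \<xi> with g(\<xi>, \<xi>) = -1, so the kernel of \<phi> lies in the line spanned by \<xi>.
  Anti-invariance says \<phi> K \<subseteq> H; as dim H < dim K, \<phi> is not injective on K, which forces \<xi> \<in> K.
  Then \<phi> is injective on the n-dimensional space of vectors in K orthogonal to \<xi>, whence \<phi> K = H.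
  Finally H is orthogonal to the timelike vector \<xi>, so the Lorentzian metric is positive definite
  on H, and dF_p carries this over to the metric of N.\<close>

lemma subspace_orth_compl: "bilinear g \<Longrightarrow> subspace (orth_compl g S)"
  unfolding orth_compl_def subspace_def by (auto simp: bilinear_ladd bilinear_lmul bilinear_lzero)

lemma bilinear_orthogonal_projection:
  fixes g :: "'a::real_vector \<Rightarrow> 'a \<Rightarrow> real"
  assumes "bilinear g" "g e e \<noteq> 0"
  shows "g (x - (g x e / g e e) *\<^sub>R e) e = 0"
  using assms by (simp add: bilinear_lsub bilinear_lmul)

lemma span_singleton_orthogonal_eq_0:
  fixes g :: "'a::real_vector \<Rightarrow> 'a \<Rightarrow> real"
  assumes "bilinear g" "g e e \<noteq> 0" "x \<in> span {e}" "g x e = 0"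
  shows "x = 0"
proof -
  obtain k where k: "x = k *\<^sub>R e" using assms(3) by (auto simp: span_singleton)
  then have "k * g e e = 0" using assms(1,4) by (simp add: bilinear_lmul)
  then show ?thesis using k assms(2) by simp
qed

lemma dim_image_eq_of_kernel_trivial:
  fixes f :: "'a::euclidean_space \<Rightarrow> 'b::euclidean_space"
  assumes "linear f" "subspace S" "\<forall>x\<in>S. f x = 0 \<longrightarrow> x = 0"
  shows "dim (f ` S) = dim S"
proof -
  have "inj_on f S" using assms(3) linear_inj_on_iff_eq_0[OF assms(1,2)] by simp
  then have "inj_on f (span S)" by (simp add: span_eq_iff[THEN iffD2, OF assms(2)])
  then show ?thesis by (rule dim_image_eq[OF assms(1)])
qed

lemma dim_Int_orth_compl_singleton:
  fixes g :: "'a::euclidean_space \<Rightarrow> 'a \<Rightarrow> real"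
  assumes g: "bilinear g" "g e e \<noteq> 0" and K: "subspace K" "e \<in> K"
  shows "dim (K \<inter> orth_compl g {e}) + 1 = dim K"
proof -
  define K' where "K' = K \<inter> orth_compl g {e}"
  have sK': "subspace K'"
    unfolding K'_def using K(1) subspace_orth_compl[OF g(1)] by (rule subspace_inter)
  have sum: "{x + y |x y. x \<in> span {e} \<and> y \<in> K'} = K"
  proof
    show "{x + y |x y. x \<in> span {e} \<and> y \<in> K'} \<subseteq> K"
      using K by (auto simp: K'_def span_singleton subspace_add subspace_scale)
    show "K \<subseteq> {x + y |x y. x \<in> span {e} \<and> y \<in> K'}"
    proof
      fix x assume x: "x \<in> K"
      define c where "c = g x e / g e e"
      have "x - c *\<^sub>R e \<in> K'"
        unfolding K'_def c_def using x K bilinear_orthogonal_projection[OF g]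
        by (simp add: orth_compl_def subspace_diff subspace_scale)
      moreover have "c *\<^sub>R e \<in> span {e}" by (simp add: span_base span_mul)
      moreover have "x = c *\<^sub>R e + (x - c *\<^sub>R e)" by simp
      ultimately show "x \<in> {x + y |x y. x \<in> span {e} \<and> y \<in> K'}" by blast
    qed
  qed
  have "span {e} \<inter> K' = {0}"
    using span_singleton_orthogonal_eq_0[OF g] subspace_0[OF sK'] span_zero
    unfolding K'_def orth_compl_def by auto
  then have "dim K = dim (span {e}) + dim K'"
    using dim_sums_Int[OF subspace_span sK', of "{e}"] unfolding sum by simp
  moreover have "e \<noteq> 0" using g by (auto simp: bilinear_lzero)
  ultimately show ?thesis unfolding K'_def by simp
qed

lemma mem_of_image_subset_lower_dim:
  fixes f :: "'a::euclidean_space \<Rightarrow> 'b::euclidean_space"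
  assumes f: "linear f" and ker: "\<And>x. f x = 0 \<Longrightarrow> x \<in> span {e}"
    and K: "subspace K" and H: "f ` K \<subseteq> H" "dim H < dim K"
  shows "e \<in> K"
proof (rule ccontr)
  assume "e \<notin> K"
  have "x = 0" if x: "x \<in> K" "f x = 0" for x
  proof (rule ccontr)
    assume "x \<noteq> 0"
    obtain k where "x = k *\<^sub>R e" using ker[OF x(2)] by (auto simp: span_singleton)
    with \<open>x \<noteq> 0\<close> have "e = inverse k *\<^sub>R x" by auto
    moreover have "inverse k *\<^sub>R x \<in> K" using K x(1) by (rule subspace_scale)
    ultimately show False using \<open>e \<notin> K\<close> by simp
  qed
  then have "dim (f ` K) = dim K" using dim_image_eq_of_kernel_trivial[OF f K] by blast
  moreover have "dim (f ` K) \<le> dim H" using H(1) by (rule dim_subset)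
  ultimately show False using H(2) by simp
qed

lemma image_eq_of_kernel_in_line:
  fixes f :: "'a::euclidean_space \<Rightarrow> 'b::euclidean_space" and g :: "'a \<Rightarrow> 'a \<Rightarrow> real"
  assumes f: "linear f" and ker: "\<And>x. f x = 0 \<Longrightarrow> x \<in> span {e}"
    and g: "bilinear g" "g e e \<noteq> 0"
    and K: "subspace K" "e \<in> K" and H: "subspace H" "f ` K \<subseteq> H" "dim K = dim H + 1"
  shows "f ` K = H"
proof -
  define K' where "K' = K \<inter> orth_compl g {e}"
  have sK': "subspace K'"
    unfolding K'_def using K(1) subspace_orth_compl[OF g(1)] by (rule subspace_inter)
  have "\<forall>x\<in>K'. f x = 0 \<longrightarrow> x = 0"
    using span_singleton_orthogonal_eq_0[OF g] ker by (auto simp: K'_def orth_compl_def)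
  then have "dim (f ` K') = dim H"
    using dim_image_eq_of_kernel_trivial[OF f sK'] dim_Int_orth_compl_singleton[OF g K] H(3)
    unfolding K'_def by simp
  moreover have "f ` K' \<subseteq> H" using H(2) by (auto simp: K'_def)
  ultimately have "f ` K' = H"
    using subspace_dim_equal[OF linear_subspace_image[OF f sK'] H(1)] by simp
  then show ?thesis using H(2) by (auto simp: K'_def)
qed

lemma dim_orth_compl_kernel:
  fixes d :: "'v::euclidean_space \<Rightarrow> 'w::euclidean_space"
  assumes g: "bilinear g" and d: "linear d"
    and nd: "nondegenerate_on g {v. d v = 0}" and bij: "bij_betw d (orth_compl g {v. d v = 0}) UNIV"
  shows "dim (orth_compl g {v. d v = 0}) = DIM('w)"
    and "dim {v. d v = 0} + DIM('w) = DIM('v)"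
proof -
  define K where "K = {v. d v = 0}"
  define H where "H = orth_compl g K"
  have sK: "subspace K" unfolding K_def using d by (rule linear_subspace_kernel)
  have sH: "subspace H" unfolding H_def using g by (rule subspace_orth_compl)
  have dimH: "dim H = DIM('w)"
    using dim_image_eq[OF d, of H] bij sH unfolding H_def K_def
    by (metis bij_betw_def dim_UNIV span_eq_iff)
  have "K \<inter> H = {0}"
    using nd sK sH g linear_0[OF d] unfolding nondegenerate_on_def H_def K_def orth_compl_def
    by (auto simp: subspace_0 bilinear_lzero)
  moreover have "{x + y |x y. x \<in> K \<and> y \<in> H} = UNIV"
  proof -
    have "v \<in> {x + y |x y. x \<in> K \<and> y \<in> H}" for v
    proof -
      obtain y where y: "y \<in> H" "d y = d v"
        using bij unfolding bij_betw_def H_def K_def by (metis UNIV_I imageE)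
      have "v - y \<in> K" unfolding K_def using y d by (simp add: linear_diff)
      moreover have "v = (v - y) + y" by simp
      ultimately show ?thesis using y(1) by blast
    qed
    then show ?thesis by auto
  qed
  ultimately show "dim {v. d v = 0} + DIM('w) = DIM('v)"
    using dim_sums_Int[OF sK sH] dimH unfolding K_def by simp
  show "dim (orth_compl g {v. d v = 0}) = DIM('w)" using dimH unfolding H_def K_def .
qed

lemma bilinear_scaleR_add_self:
  fixes g :: "'a::real_vector \<Rightarrow> 'a \<Rightarrow> real"
  assumes "bilinear g" "\<And>x y. g x y = g y x"
  shows "g (a *\<^sub>R x + b *\<^sub>R y) (a *\<^sub>R x + b *\<^sub>R y) = a*a * g x x + 2*a*b * g x y + b*b * g y y"
proof -
  have "g (a *\<^sub>R x + b *\<^sub>R y) (a *\<^sub>R x + b *\<^sub>R y) = a*a * g x x + a*b * g x y + b*a * g y x + b*b * g y y"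
    using assms(1) by (simp add: bilinear_ladd bilinear_radd bilinear_lmul bilinear_rmul algebra_simps)
  then show ?thesis using assms(2)[of y x] by (simp add: algebra_simps)
qed

lemma psd_null_vector_orthogonal:
  fixes g :: "'a::real_vector \<Rightarrow> 'a \<Rightarrow> real"
  assumes g: "bilinear g" "\<And>x y. g x y = g y x"
    and S: "subspace S" "\<forall>x\<in>S. g x x \<ge> 0"
    and Y: "Y \<in> S" "g Y Y = 0" and Z: "Z \<in> S"
  shows "g Y Z = 0"
proof (rule ccontr)
  assume a: "g Y Z \<noteq> 0"
  define t where "t = (g Z Z + 1) / (2 * g Y Z)"
  define W where "W = 1 *\<^sub>R Z + (- t) *\<^sub>R Y"
  have "W \<in> S" unfolding W_def using S(1) Y(1) Z by (simp add: subspace_diff subspace_scale)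
  have "g W W = g Z Z - 2 * t * g Y Z"
    unfolding W_def using bilinear_scaleR_add_self[OF g, of 1 Z "-t" Y] Y(2) g(2)[of Z Y] by simp
  also have "\<dots> = -1" using a unfolding t_def by (simp add: field_simps)
  finally show False using S(2) \<open>W \<in> S\<close> by fastforce
qed

lemma dim_le_form_index:
  fixes g :: "'v::euclidean_space \<Rightarrow> 'v \<Rightarrow> real"
  assumes "subspace W" "\<forall>x\<in>W. x \<noteq> 0 \<longrightarrow> g x x < 0"
  shows "dim W \<le> form_index g"
proof -
  let ?S = "{dim W | W. subspace W \<and> (\<forall>x\<in>W. x \<noteq> 0 \<longrightarrow> g x x < 0)}"
  have "finite ?S"
    by (rule finite_subset[of _ "{..DIM('v)}"]) (auto simp: dim_subset_UNIV)
  then show ?thesis using assms unfolding form_index_def by (intro Max_ge) blast+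
qed

lemma lorentzian_formD:
  assumes "lorentzian_form g"
  shows "bilinear g" "g x y = g y x" "nondegenerate_form g" "form_index g = 1"
  using assms by (simp_all add: lorentzian_form_def semi_riemannian_form_def sym_bilinear_form_def)

text \<open>Otherwise the two vectors would span a negative definite plane.\<close>
lemma lorentzian_orthogonal_not_timelike:
  fixes g :: "'v::euclidean_space \<Rightarrow> 'v \<Rightarrow> real"
  assumes L: "lorentzian_form g" and e: "g e e < 0" and Y: "g Y e = 0"
  shows "g Y Y \<ge> 0"
proof (rule ccontr)
  assume "\<not> g Y Y \<ge> 0"
  then have YY: "g Y Y < 0" by simp
  note bil = lorentzian_formD(1)[OF L] and sym = lorentzian_formD(2)[OF L]
  have "Y \<noteq> 0" using YY bil by (auto simp: bilinear_lzero)
  moreover have "e \<notin> span {Y}"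
  proof
    assume "e \<in> span {Y}"
    then obtain k where "e = k *\<^sub>R Y" by (auto simp: span_singleton)
    then have "g e e = k * g Y e" using bil sym by (simp add: bilinear_lmul)
    with Y e show False by simp
  qed
  ultimately have "dim (span {e, Y}) = 2" by (simp add: dim_insert)
  moreover have "dim (span {e, Y}) \<le> 1"
  proof -
    have "g x x < 0" if x_span: "x \<in> span {e, Y}" and "x \<noteq> 0" for x
    proof -
      obtain a where "x - a *\<^sub>R e \<in> span {Y}" using x_span by (auto simp: span_breakdown_eq)
      then obtain b where "x - a *\<^sub>R e = b *\<^sub>R Y" by (auto simp: span_singleton)
      then have x: "x = a *\<^sub>R e + b *\<^sub>R Y" by (metis add.commute diff_add_cancel)
      have "g x x = a*a * g e e + b*b * g Y Y"
        using bilinear_scaleR_add_self[OF bil sym, of a e b Y] x sym[of e Y] Y by simp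
      moreover have "a \<noteq> 0 \<or> b \<noteq> 0" using x \<open>x \<noteq> 0\<close> by auto
      ultimately show "g x x < 0" using e YY
        by (smt (verit) mult_nonneg_nonneg mult_pos_neg mult_neg_pos zero_less_mult_iff mult_nonneg_nonpos)
    qed
    then show ?thesis
      using dim_le_form_index[OF subspace_span, of "{e, Y}" g] lorentzian_formD(4)[OF L] by simp
  qed
  ultimately show False by simp
qed

text \<open>The form is positive semidefinite on the orthogonal complement of e, so a null vector there
  would be orthogonal both to that complement and to e, contradicting nondegeneracy.\<close>
lemma lorentzian_orthogonal_spacelike:
  fixes g :: "'v::euclidean_space \<Rightarrow> 'v \<Rightarrow> real"
  assumes L: "lorentzian_form g" and e: "g e e < 0" and Y: "g Y e = 0" "Y \<noteq> 0"
  shows "g Y Y > 0"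
proof (rule ccontr)
  assume "\<not> g Y Y > 0"
  then have YY: "g Y Y = 0" using lorentzian_orthogonal_not_timelike[OF L e Y(1)] by simp
  note bil = lorentzian_formD(1)[OF L] and sym = lorentzian_formD(2)[OF L]
  define S where "S = orth_compl g {e}"
  have "subspace S" unfolding S_def by (rule subspace_orth_compl[OF bil])
  moreover have "\<forall>x\<in>S. g x x \<ge> 0"
    unfolding S_def orth_compl_def using lorentzian_orthogonal_not_timelike[OF L e] by simp
  ultimately have S: "subspace S" "\<forall>x\<in>S. g x x \<ge> 0" by blast+
  have "g Y Z = 0" for Z
  proof -
    define c where "c = g Z e / g e e"
    have "Z - c *\<^sub>R e \<in> S"
      unfolding S_def c_def using bilinear_orthogonal_projection[OF bil] e by (simp add: orth_compl_def)
    then have "g Y (Z - c *\<^sub>R e) = 0"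
      using psd_null_vector_orthogonal[OF bil sym S _ YY] Y(1) by (simp add: S_def orth_compl_def)
    then show ?thesis using Y(1) sym[of Y e] bil by (simp add: bilinear_rsub bilinear_rmul)
  qed
  then show False using lorentzian_formD(3)[OF L] Y(2) unfolding nondegenerate_form_def by blast
qed

lemma lorentzian_almost_para_contactD:
  assumes "lorentzian_almost_para_contact eps g \<phi> \<xi> \<eta>"
  shows "lorentzian_form (g p)" "linear (\<phi> p)"
    and "\<phi> p (\<phi> p X) = eps *\<^sub>R X + \<eta> p X *\<^sub>R \<xi> p"
    and "\<eta> p X = eps * g p X (\<xi> p)" "\<eta> p (\<xi> p) = - eps"
  using assms unfolding lorentzian_almost_para_contact_def by blast+

lemma lorentzian_almost_para_contact_xi_unit_timelike:
  assumes "lorentzian_almost_para_contact eps g \<phi> \<xi> \<eta>" "eps \<noteq> 0"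
  shows "g p (\<xi> p) (\<xi> p) = -1"
proof -
  have "eps * (g p (\<xi> p) (\<xi> p) + 1) = 0"
    using lorentzian_almost_para_contactD(4,5)[OF assms(1)] by (simp add: algebra_simps)
  then show ?thesis using assms(2) by simp
qed

lemma lorentzian_almost_para_contact_phi_kernel:
  assumes "lorentzian_almost_para_contact eps g \<phi> \<xi> \<eta>" "eps \<noteq> 0" "\<phi> p x = 0"
  shows "x = - g p x (\<xi> p) *\<^sub>R \<xi> p"
proof -
  have "0 = \<phi> p (\<phi> p x)"
    using assms(3) linear_0[OF lorentzian_almost_para_contactD(2)[OF assms(1)]] by simp
  also have "\<dots> = eps *\<^sub>R (x + g p x (\<xi> p) *\<^sub>R \<xi> p)"
    using lorentzian_almost_para_contactD(3,4)[OF assms(1)] by (simp add: scaleR_add_right)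
  finally show ?thesis using assms(2) by (simp add: eq_neg_iff_add_eq_0)
qed

lemma semi_riemannian_submersionD:
  assumes "semi_riemannian_submersion gM gN F dF"
  shows "surj F" "linear (dF p)" "nondegenerate_on (gM p) {v. dF p v = 0}"
    and "bij_betw (dF p) (orth_compl (gM p) {v. dF p v = 0}) UNIV"
    and "X \<in> orth_compl (gM p) {v. dF p v = 0} \<Longrightarrow> Y \<in> orth_compl (gM p) {v. dF p v = 0}
      \<Longrightarrow> gN (F p) (dF p X) (dF p Y) = gM p X Y"
  using assms unfolding semi_riemannian_submersion_def by blast+

lemma anti_invariant_submersion_equal_dim:
  fixes gM :: "'p \<Rightarrow> 'v::euclidean_space \<Rightarrow> 'v \<Rightarrow> real"
    and dF :: "'p \<Rightarrow> 'v \<Rightarrow> 'w::euclidean_space"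
  assumes eps: "eps \<noteq> 0" and contact: "lorentzian_almost_para_contact eps gM \<phi> \<xi> \<eta>"
    and F: "semi_riemannian_submersion gM gN F dF" and anti: "anti_invariant gM \<phi> dF"
    and dim: "DIM('v) = 2 * DIM('w) + 1"
  shows "dF p (\<xi> p) = 0"
    and "\<phi> p ` {v. dF p v = 0} = orth_compl (gM p) {v. dF p v = 0}"
proof -
  define K where "K = {v. dF p v = 0}"
  define H where "H = orth_compl (gM p) K"
  have g: "bilinear (gM p)" and f: "linear (\<phi> p)"
    using lorentzian_almost_para_contactD(1,2)[OF contact] lorentzian_formD(1) by auto
  have d: "linear (dF p)" "nondegenerate_on (gM p) K" "bij_betw (dF p) H UNIV"
    using semi_riemannian_submersionD(2-4)[OF F] unfolding K_def H_def by auto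
  have "dim H = DIM('w)" and "dim K + DIM('w) = DIM('v)"
    using dim_orth_compl_kernel[OF g d[unfolded K_def H_def]] unfolding K_def H_def by auto
  with dim have dimK: "dim K = dim H + 1" by simp
  have sK: "subspace K" unfolding K_def using d(1) by (rule linear_subspace_kernel)
  have sH: "subspace H" unfolding H_def using g by (rule subspace_orth_compl)
  have fKH: "\<phi> p ` K \<subseteq> H" using anti unfolding anti_invariant_def K_def H_def by blast
  have ker: "x \<in> span {\<xi> p}" if "\<phi> p x = 0" for x
    using lorentzian_almost_para_contact_phi_kernel[OF contact eps that]
    unfolding span_singleton by blast
  have "\<xi> p \<in> K"
    using mem_of_image_subset_lower_dim[OF f ker sK fKH] dimK by simp
  then show "dF p (\<xi> p) = 0" unfolding K_def by simp
  have "gM p (\<xi> p) (\<xi> p) \<noteq> 0"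
    using lorentzian_almost_para_contact_xi_unit_timelike[OF contact eps] by simp
  then show "\<phi> p ` {v. dF p v = 0} = orth_compl (gM p) {v. dF p v = 0}"
    using image_eq_of_kernel_in_line[OF f ker g _ sK \<open>\<xi> p \<in> K\<close> sH fKH dimK]
    unfolding K_def H_def by simp
qed

lemma semi_riemannian_submersion_base_positive_definite:
  assumes gN: "sym_bilinear_form (gN q)" and F: "semi_riemannian_submersion gM gN F dF"
    and L: "\<forall>p. lorentzian_form (gM p)"
    and timelike: "\<forall>p. dF p (\<xi> p) = 0 \<and> gM p (\<xi> p) (\<xi> p) < 0"
  shows "positive_definite_form (gN q)"
proof -
  have "q \<in> range F" using semi_riemannian_submersionD(1)[OF F] by simp
  then obtain p where p: "F p = q" by blast
  define H where "H = orth_compl (gM p) {v. dF p v = 0}"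
  have d: "linear (dF p)" "bij_betw (dF p) H UNIV"
    using semi_riemannian_submersionD(2,4)[OF F] unfolding H_def by simp_all
  have iso: "gN (F p) (dF p X) (dF p Y) = gM p X Y" if "X \<in> H" "Y \<in> H" for X Y
    using semi_riemannian_submersionD(5)[OF F] that unfolding H_def by blast
  have "gN q x x > 0" if "x \<noteq> 0" for x
  proof -
    obtain Y where Y: "Y \<in> H" "dF p Y = x"
      using d(2) unfolding bij_betw_def by (metis UNIV_I imageE)
    have "Y \<noteq> 0" using Y(2) that linear_0[OF d(1)] by auto
    moreover have "gM p Y (\<xi> p) = 0" using Y(1) timelike unfolding H_def orth_compl_def by blast
    ultimately have "gM p Y Y > 0"
      using lorentzian_orthogonal_spacelike[of "gM p" "\<xi> p" Y] L timelike by simp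
    then show ?thesis using iso[OF Y(1) Y(1)] Y(2) p by simp
  qed
  then show ?thesis using gN by (simp add: positive_definite_form_def)
qed

theorem mainTheorem17:
  fixes eps :: real and m n :: nat
    and gM :: "'p \<Rightarrow> 'v::euclidean_space \<Rightarrow> 'v \<Rightarrow> real"
    and \<phi> :: "'p \<Rightarrow> 'v \<Rightarrow> 'v" and \<xi> :: "'p \<Rightarrow> 'v" and \<eta> :: "'p \<Rightarrow> 'v \<Rightarrow> real"
    and gN :: "'q \<Rightarrow> 'w::euclidean_space \<Rightarrow> 'w \<Rightarrow> real"
    and F :: "'p \<Rightarrow> 'q" and dF :: "'p \<Rightarrow> 'v \<Rightarrow> 'w"
  assumes "eps = -1 \<or> eps = 1"
    and "DIM('v) = 2 * m + 1"
    and "lorentzian_almost_para_contact eps gM \<phi> \<xi> \<eta>"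
    and "DIM('w) = n"
    and "\<forall>q. semi_riemannian_form (gN q)"
    and "semi_riemannian_submersion gM gN F dF"
    and "anti_invariant gM \<phi> dF"
    and "m = n"
  shows "(\<forall>p. \<phi> p ` {v. dF p v = 0} = orth_compl (gM p) {v. dF p v = 0})
         \<and> (\<forall>q. positive_definite_form (gN q))"
proof -
  have eps: "eps \<noteq> 0" and dim: "DIM('v) = 2 * DIM('w) + 1" using assms(1,2,4,8) by auto
  note vertical = anti_invariant_submersion_equal_dim[OF eps assms(3,6,7) dim]
  have "\<forall>p. lorentzian_form (gM p)"
    using lorentzian_almost_para_contactD(1)[OF assms(3)] by blast
  moreover have "\<forall>p. dF p (\<xi> p) = 0 \<and> gM p (\<xi> p) (\<xi> p) < 0"
    using vertical(1) lorentzian_almost_para_contact_xi_unit_timelike[OF assms(3) eps] by simp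
  moreover have "sym_bilinear_form (gN q)" for q
    using assms(5) by (simp add: semi_riemannian_form_def)
  ultimately have "positive_definite_form (gN q)" for q
    using semi_riemannian_submersion_base_positive_definite[OF _ assms(6)] by blast
  then show ?thesis using vertical(2) by blast
qed

end
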